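(* Let $f$ be an integer-valued function on the nonnegative integers such that $f(k)\ge 2 f(k-1) - 1$ for each $k\ge 1$ and $f(1)\ge 1$. If $M$ is a matroid with $\epsilon(M)\ge f(r(M))$ and $r(M)\ge 1$, then there is a round restriction $N$ of $M$ such that $\epsilon(N)\ge f(r(N))$ and $r(N)\ge 1$.
   Context: A matroid $M$ is round if $E(M)$ cannot be partitioned into two sets each of rank less than $r(M)$. A point is a rank-$1$ flat and $\epsilon(M)$ is the number of points of $M$. *)

theory Defs
  imports Main
begin

definition matroid :: "'a set \<Rightarrow> ('a set \<Rightarrow> bool) \<Rightarrow> bool" where
  "matroid E indep \<longleftrightarrow> finite E \<and> (\<forall>I. indep I \<longrightarrow> I \<subseteq> E) \<and> indep {} \<and>
     (\<forall>I J. indep J \<and> I \<subseteq> J \<longrightarrow> indep I) \<and>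
     (\<forall>I J. indep I \<and> indep J \<and> card I < card J \<longrightarrow> (\<exists>e\<in>J - I. indep (insert e I)))"

definition mrank :: "('a set \<Rightarrow> bool) \<Rightarrow> 'a set \<Rightarrow> nat" where
  "mrank indep X = Max {card I | I. I \<subseteq> X \<and> indep I}"

definition restr :: "('a set \<Rightarrow> bool) \<Rightarrow> 'a set \<Rightarrow> 'a set \<Rightarrow> bool" where
  "restr indep X = (\<lambda>I. indep I \<and> I \<subseteq> X)"

definition flat :: "'a set \<Rightarrow> ('a set \<Rightarrow> bool) \<Rightarrow> 'a set \<Rightarrow> bool" where
  "flat E indep F \<longleftrightarrow> F \<subseteq> E \<and> (\<forall>e \<in> E - F. mrank indep (insert e F) > mrank indep F)"

definition num_points :: "'a set \<Rightarrow> ('a set \<Rightarrow> bool) \<Rightarrow> nat" where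
  "num_points E indep = card {F. flat E indep F \<and> mrank indep F = 1}"

definition round :: "'a set \<Rightarrow> ('a set \<Rightarrow> bool) \<Rightarrow> bool" where
  "round E indep \<longleftrightarrow> (\<forall>A B. A \<union> B = E \<longrightarrow> A \<inter> B = {} \<longrightarrow>
      mrank indep A = mrank indep E \<or> mrank indep B = mrank indep E)"

end

theory Submission
  imports Defs
begin

text \<open>Induct on the rank. If \<open>M\<close> is not round, split \<open>E = A \<union> B\<close> with \<open>r(A), r(B) < r(M)\<close>;
  subadditivity of rank forces \<open>r(A), r(B) \<ge> 1\<close>. Every point of \<open>M\<close> contains a nonloop lying in
  \<open>A\<close> or in \<open>B\<close>, and intersecting with \<open>A\<close> (resp. \<open>B\<close>) maps such points injectively to points
  of \<open>M|A\<close> (resp. \<open>M|B\<close>), so \<open>\<epsilon>(M) \<le> \<epsilon>(M|A) + \<epsilon>(M|B)\<close>. The hypotheses make \<open>f\<close>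
  nondecreasing, so \<open>\<epsilon>(M|A) < f(r(A))\<close> and \<open>\<epsilon>(M|B) < f(r(B))\<close> would give
  \<open>\<epsilon>(M) \<le> 2 f(r(M) - 1) - 2 < f(r(M))\<close>; hence one side satisfies the hypothesis and the
  induction hypothesis applies to it.\<close>

lemma matroid_finite: "matroid E indep \<Longrightarrow> finite E"
  by (simp add: matroid_def)

lemma matroid_indep_subset: "matroid E indep \<Longrightarrow> indep I \<Longrightarrow> I \<subseteq> E"
  by (simp add: matroid_def)

lemma matroid_indep_empty: "matroid E indep \<Longrightarrow> indep {}"
  by (simp add: matroid_def)

lemma matroid_indep_subset_indep: "matroid E indep \<Longrightarrow> indep J \<Longrightarrow> I \<subseteq> J \<Longrightarrow> indep I"
  unfolding matroid_def by blast

lemma matroid_augment: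
  "matroid E indep \<Longrightarrow> indep I \<Longrightarrow> indep J \<Longrightarrow> card I < card J \<Longrightarrow> \<exists>e\<in>J - I. indep (insert e I)"
  unfolding matroid_def by blast

lemma finite_indep_cards:
  assumes "matroid E indep"
  shows "finite {card I | I. I \<subseteq> X \<and> indep I}"
proof -
  have "{card I | I. I \<subseteq> X \<and> indep I} \<subseteq> {..card E}"
    using assms matroid_finite matroid_indep_subset by (fastforce intro: card_mono)
  then show ?thesis
    using finite_subset by blast
qed

lemma card_le_mrank:
  assumes "matroid E indep" "I \<subseteq> X" "indep I"
  shows "card I \<le> mrank indep X"
  unfolding mrank_def using assms by (intro Max_ge[OF finite_indep_cards[OF assms(1)]]) blast

lemma mrank_attained:
  assumes "matroid E indep"
  obtains I where "I \<subseteq> X" "indep I" "card I = mrank indep X"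
proof -
  have "0 \<in> {card I | I. I \<subseteq> X \<and> indep I}"
    unfolding mem_Collect_eq by (rule exI[of _ "{}"]) (simp add: matroid_indep_empty[OF assms])
  then have "mrank indep X \<in> {card I | I. I \<subseteq> X \<and> indep I}"
    unfolding mrank_def using Max_in[OF finite_indep_cards[OF assms]] by blast
  then show ?thesis
    using that by (auto simp del: card_eq_0_iff)
qed

lemma mrank_mono:
  assumes "matroid E indep" "X \<subseteq> Y"
  shows "mrank indep X \<le> mrank indep Y"
proof -
  obtain I where "I \<subseteq> X" "indep I" "card I = mrank indep X"
    using mrank_attained[OF assms(1)] .
  then show ?thesis
    using card_le_mrank[OF assms(1), of I Y] assms(2) by auto
qed

lemma mrank_Un_le:
  assumes m: "matroid E indep"
  shows "mrank indep (A \<union> B) \<le> mrank indep A + mrank indep B"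
proof -
  obtain I where I: "I \<subseteq> A \<union> B" "indep I" "card I = mrank indep (A \<union> B)"
    using mrank_attained[OF m] .
  have "card I \<le> card (I \<inter> A) + card (I \<inter> B)"
    using I(1) card_Un_le[of "I \<inter> A" "I \<inter> B"] by (simp add: Int_Un_distrib[symmetric] Int_absorb2)
  also have "\<dots> \<le> mrank indep A + mrank indep B"
    using card_le_mrank[OF m] matroid_indep_subset_indep[OF m I(2)] by (intro add_mono) auto
  finally show ?thesis
    using I(3) by simp
qed

lemma mrank_restr: "mrank (restr indep A) Y = mrank indep (Y \<inter> A)"
proof -
  have "{card I | I. I \<subseteq> Y \<and> restr indep A I} = {card I | I. I \<subseteq> Y \<inter> A \<and> indep I}"
    unfolding restr_def by auto
  then show ?thesis
    unfolding mrank_def by simp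
qed

lemma restr_restr: "X \<subseteq> A \<Longrightarrow> restr (restr indep A) X = restr indep X"
  unfolding restr_def by auto

lemma restr_ground: "matroid E indep \<Longrightarrow> restr indep E = indep"
  unfolding restr_def using matroid_indep_subset by fastforce

lemma matroid_restr:
  assumes m: "matroid E indep" and "A \<subseteq> E"
  shows "matroid A (restr indep A)"
proof -
  have "finite A"
    using assms matroid_finite finite_subset by blast
  moreover have "\<exists>e\<in>J - I. restr indep A (insert e I)"
    if "restr indep A I" "restr indep A J" "card I < card J" for I J
    using matroid_augment[OF m] that unfolding restr_def by blast
  moreover have "restr indep A {}"
    unfolding restr_def using matroid_indep_empty[OF m] by simp
  moreover have "restr indep A I" if "restr indep A J" "I \<subseteq> J" for I J
    using that matroid_indep_subset_indep[OF m] unfolding restr_def by blast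
  moreover have "I \<subseteq> A" if "restr indep A I" for I
    using that unfolding restr_def by blast
  ultimately show ?thesis
    unfolding matroid_def by blast
qed

definition points :: "'a set \<Rightarrow> ('a set \<Rightarrow> bool) \<Rightarrow> 'a set set" where
  "points E indep = {F. flat E indep F \<and> mrank indep F = 1}"

lemma num_points_eq_card_points: "num_points E indep = card (points E indep)"
  by (simp add: num_points_def points_def)

lemma finite_points:
  assumes "finite E"
  shows "finite (points E indep)"
proof -
  have "points E indep \<subseteq> Pow E"
    unfolding points_def flat_def by auto
  then show ?thesis
    using assms by (meson finite_Pow_iff finite_subset)
qed

lemma point_has_nonloop:
  assumes m: "matroid E indep" and "mrank indep P = 1"
  obtains x where "x \<in> P" "indep {x}"
proof -
  obtain I where I: "I \<subseteq> P" "indep I" "card I = mrank indep P"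
    by (rule mrank_attained[OF m])
  then obtain x where "I = {x}"
    using assms(2) card_1_singletonE by metis
  then show ?thesis
    using I that by auto
qed

lemma mrank_insert_parallel_le_1:
  assumes m: "matroid E indep" and P: "mrank indep P \<le> 1" and x: "x \<in> P" "indep {x}"
    and xe: "mrank indep {x, e} \<le> 1"
  shows "mrank indep (insert e P) \<le> 1"
proof (rule ccontr)
  assume "\<not> mrank indep (insert e P) \<le> 1"
  moreover obtain J where J: "J \<subseteq> insert e P" "indep J" "card J = mrank indep (insert e P)"
    using mrank_attained[OF m] .
  ultimately obtain y where y: "y \<in> J - {x}" "indep {y, x}"
    using matroid_augment[OF m x(2) J(2)] by auto
  then have rank_2: "2 \<le> mrank indep X" if "{y, x} \<subseteq> X" for X
    using card_le_mrank[OF m that y(2)] by auto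
  have "{y, x} \<subseteq> {x, e} \<or> {y, x} \<subseteq> P"
    using J(1) x(1) y(1) by auto
  then have "2 \<le> mrank indep {x, e} \<or> 2 \<le> mrank indep P"
    using rank_2 by blast
  with P xe show False
    by linarith
qed

lemma points_Int_in_points_restr:
  assumes m: "matroid E indep" and "A \<subseteq> E" and P: "P \<in> points E indep"
    and x: "x \<in> P \<inter> A" "indep {x}"
  shows "P \<inter> A \<in> points A (restr indep A)"
proof -
  have P_flat: "P \<subseteq> E" "mrank indep P = 1" "\<forall>e\<in>E - P. mrank indep (insert e P) > 1"
    using P unfolding points_def flat_def by auto
  have rank_PA: "mrank indep (P \<inter> A) = 1"
    using card_le_mrank[OF m _ x(2), of "P \<inter> A"] mrank_mono[OF m, of "P \<inter> A" P] x P_flat(2)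
    by auto
  have "mrank indep (insert e (P \<inter> A)) > 1" if e: "e \<in> A - P" for e
  proof -
    have "mrank indep (insert e P) > 1"
      using e P_flat(3) \<open>A \<subseteq> E\<close> by auto
    then have "mrank indep {x, e} > 1"
      using mrank_insert_parallel_le_1[OF m _ _ x(2), of P e] P_flat(2) x(1) by fastforce
    moreover have "mrank indep {x, e} \<le> mrank indep (insert e (P \<inter> A))"
      using mrank_mono[OF m] x(1) by auto
    ultimately show ?thesis
      by linarith
  qed
  then show ?thesis
    using rank_PA unfolding points_def flat_def mrank_restr
    by (auto simp: Int_absorb2 insert_absorb)
qed

lemma points_eq_if_Int_eq:
  assumes m: "matroid E indep" and P: "P \<in> points E indep" and Q: "Q \<in> points E indep"
    and x: "x \<in> P \<inter> A" "indep {x}" and PQ: "P \<inter> A = Q \<inter> A"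
  shows "P = Q"
proof -
  have "P \<subseteq> Q" if P: "P \<in> points E indep" and Q: "Q \<in> points E indep"
    and x: "x \<in> P" "x \<in> Q" for P Q
  proof
    fix e assume e: "e \<in> P"
    have "mrank indep {x, e} \<le> 1"
      using mrank_mono[OF m, of "{x, e}" P] e x P unfolding points_def by auto
    then have "mrank indep (insert e Q) \<le> 1"
      using mrank_insert_parallel_le_1[OF m _ x(2) \<open>indep {x}\<close>] Q unfolding points_def by auto
    moreover have "e \<in> E"
      using P e unfolding points_def flat_def by auto
    ultimately show "e \<in> Q"
      using Q unfolding points_def flat_def by force
  qed
  then show ?thesis
    using P Q x PQ by blast
qed

lemma card_points_meeting_le:
  assumes m: "matroid E indep" and A: "A \<subseteq> E"
  shows "card {P \<in> points E indep. \<exists>x\<in>P \<inter> A. indep {x}} \<le> num_points A (restr indep A)"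
  unfolding num_points_eq_card_points
proof (rule card_inj_on_le[where f = "\<lambda>P. P \<inter> A"])
  show "inj_on (\<lambda>P. P \<inter> A) {P \<in> points E indep. \<exists>x\<in>P \<inter> A. indep {x}}"
  proof (rule inj_onI)
    fix P Q
    assume "P \<in> {P \<in> points E indep. \<exists>x\<in>P \<inter> A. indep {x}}" "Q \<in> {P \<in> points E indep. \<exists>x\<in>P \<inter> A. indep {x}}"
      and "P \<inter> A = Q \<inter> A"
    then show "P = Q"
      using points_eq_if_Int_eq[OF m] by blast
  qed
  show "(\<lambda>P. P \<inter> A) ` {P \<in> points E indep. \<exists>x\<in>P \<inter> A. indep {x}} \<subseteq> points A (restr indep A)"
    using points_Int_in_points_restr[OF m A] by blast
  show "finite (points A (restr indep A))"
    using A matroid_finite[OF m] finite_subset finite_points by blast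
qed

lemma num_points_Un_le:
  assumes m: "matroid E indep" and AB: "A \<union> B = E"
  shows "num_points E indep \<le> num_points A (restr indep A) + num_points B (restr indep B)"
proof -
  let ?meeting = "\<lambda>A. {P \<in> points E indep. \<exists>x\<in>P \<inter> A. indep {x}}"
  have "points E indep \<subseteq> ?meeting A \<union> ?meeting B"
  proof
    fix P assume P: "P \<in> points E indep"
    then obtain x where "x \<in> P" "indep {x}"
      using point_has_nonloop[OF m] unfolding points_def by blast
    moreover have "P \<subseteq> E"
      using P unfolding points_def flat_def by auto
    ultimately show "P \<in> ?meeting A \<union> ?meeting B"
      using P AB by blast
  qed
  then have "num_points E indep \<le> card (?meeting A \<union> ?meeting B)"
    unfolding num_points_eq_card_points
    using finite_points[OF matroid_finite[OF m]] by (intro card_mono) auto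
  also have "\<dots> \<le> card (?meeting A) + card (?meeting B)"
    by (rule card_Un_le)
  also have "\<dots> \<le> num_points A (restr indep A) + num_points B (restr indep B)"
    using card_points_meeting_le[OF m, of A] card_points_meeting_le[OF m, of B] AB
    by (intro add_mono) blast+
  finally show ?thesis .
qed

lemma not_round_split:
  assumes m: "matroid E indep" and "\<not> round E indep"
  obtains A B where "A \<union> B = E"
    "1 \<le> mrank indep A" "mrank indep A < mrank indep E"
    "1 \<le> mrank indep B" "mrank indep B < mrank indep E"
proof -
  obtain A B where AB: "A \<union> B = E" "mrank indep A \<noteq> mrank indep E" "mrank indep B \<noteq> mrank indep E"
    using assms(2) unfolding round_def by blast
  then have "mrank indep A < mrank indep E" "mrank indep B < mrank indep E"
    using mrank_mono[OF m, of A E] mrank_mono[OF m, of B E] by auto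
  moreover have "mrank indep E \<le> mrank indep A + mrank indep B"
    using mrank_Un_le[OF m, of A B] AB(1) by simp
  ultimately show ?thesis
    using that[OF AB(1)] by linarith
qed

lemma doubling_ge_1:
  fixes f :: "nat \<Rightarrow> int"
  assumes f: "\<forall>k\<ge>1. f k \<ge> 2 * f (k - 1) - 1" "f 1 \<ge> 1" and "k \<ge> 1"
  shows "f k \<ge> 1"
  using \<open>k \<ge> 1\<close>
proof (induction k rule: dec_induct)
  case (step k)
  then show ?case
    using f(1)[rule_format, of "Suc k"] by simp
qed (use f in simp)

lemma doubling_mono:
  fixes f :: "nat \<Rightarrow> int"
  assumes f: "\<forall>k\<ge>1. f k \<ge> 2 * f (k - 1) - 1" "f 1 \<ge> 1"
  shows "mono f"
proof (rule mono_iff_le_Suc[THEN iffD2], rule allI)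
  fix n
  have "f (Suc n) \<ge> 2 * f n - 1"
    using f(1)[rule_format, of "Suc n"] by simp
  moreover have "f n \<ge> 1 \<or> n = 0"
    using doubling_ge_1[OF f] by (cases n) auto
  ultimately show "f n \<le> f (Suc n)"
    using f(2) by auto
qed

lemma doubling_bound_split:
  fixes f :: "nat \<Rightarrow> int"
  assumes f: "\<forall>k\<ge>1. f k \<ge> 2 * f (k - 1) - 1" "f 1 \<ge> 1"
    and "f n \<le> a + b" "p < n" "q < n"
  shows "f p \<le> a \<or> f q \<le> b"
proof -
  have "f p \<le> f (n - 1)" "f q \<le> f (n - 1)"
    using monoD[OF doubling_mono[OF f]] assms(4,5) by simp_all
  moreover have "f n \<ge> 2 * f (n - 1) - 1"
    using f(1) assms(4) by simp
  ultimately show ?thesis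
    using assms(3) by linarith
qed

theorem lemma2p4:
  fixes f :: "nat \<Rightarrow> int" and E :: "'a set" and indep :: "'a set \<Rightarrow> bool"
  assumes "\<forall>k\<ge>1. f k \<ge> 2 * f (k - 1) - 1"
    and "f 1 \<ge> 1"
    and "matroid E indep"
    and "int (num_points E indep) \<ge> f (mrank indep E)"
    and "mrank indep E \<ge> 1"
  shows "\<exists>X \<subseteq> E. round X (restr indep X) \<and>
           int (num_points X (restr indep X)) \<ge> f (mrank (restr indep X) X) \<and>
           mrank (restr indep X) X \<ge> 1"
  using assms(3-5)
proof (induction "mrank indep E" arbitrary: E indep rule: less_induct)
  case less
  note m = \<open>matroid E indep\<close>
  show ?case
  proof (cases "round E indep")
    case True
    then show ?thesis
      using less.prems(2,3) by (intro exI[of _ E]) (simp add: restr_ground[OF m])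
  next
    case False
    then obtain A B where AB: "A \<union> B = E" "1 \<le> mrank indep A" "mrank indep A < mrank indep E"
      "1 \<le> mrank indep B" "mrank indep B < mrank indep E"
      using not_round_split[OF m] by blast
    have "f (mrank indep E) \<le> int (num_points A (restr indep A)) + int (num_points B (restr indep B))"
      using num_points_Un_le[OF m AB(1)] less.prems(2) by linarith
    then obtain Y where Y: "Y \<in> {A, B}" "f (mrank indep Y) \<le> int (num_points Y (restr indep Y))"
      using doubling_bound_split[OF assms(1,2) _ AB(3,5)] by blast
    then have "Y \<subseteq> E" "1 \<le> mrank indep Y" "mrank indep Y < mrank indep E"
      using AB by auto
    then obtain X where "X \<subseteq> Y" "round X (restr (restr indep Y) X)"
      "int (num_points X (restr (restr indep Y) X)) \<ge> f (mrank (restr (restr indep Y) X) X)"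
      "mrank (restr (restr indep Y) X) X \<ge> 1"
      using less.hyps[OF _ matroid_restr[OF m]] Y(2) unfolding mrank_restr Int_absorb by blast
    then show ?thesis
      unfolding restr_restr[OF \<open>X \<subseteq> Y\<close>] using \<open>Y \<subseteq> E\<close> by blast
  qed
qed

end
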